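(* Let $\Omega$ be a bounded measurable set in $\mathbb{R}^d$, let $\mu$ be a positive, locally finite Borel measure on $\mathbb{R}^d$, and let $\Sigma\subset\mathbb{R}^d$ be measurable. Suppose $\mathbf{1}_\Omega\ast\mu=0$ a.e. on $\Sigma^c=\mathbb{R}^d\setminus\Sigma$. Then $m((\Omega+t)\cap\Sigma^c)=0$ for every $t\in\operatorname{supp}(\mu)$.
   Context: $m$ is Lebesgue measure, $\operatorname{supp}(\mu)$ the closed support of $\mu$. *)

theory Defs
  imports "HOL-Analysis.Analysis"
begin

definition locally_finite_measure :: "'a::topological_space measure \<Rightarrow> bool" where
  "locally_finite_measure M \<longleftrightarrow>
     (\<forall>x. \<exists>U. open U \<and> x \<in> U \<and> emeasure M U < \<infinity>)"

definition measure_support :: "'a::topological_space measure \<Rightarrow> 'a set" where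
  "measure_support M = {x. \<forall>U. open U \<longrightarrow> x \<in> U \<longrightarrow> emeasure M U > 0}"

definition conv_indicator_measure :: "'a::euclidean_space set \<Rightarrow> 'a measure \<Rightarrow> 'a \<Rightarrow> ennreal" where
  "conv_indicator_measure A M x = (\<integral>\<^sup>+ y. indicator A (x - y) \<partial>M)"

end

(* Choose Borel sets B \<subseteq> \<Omega> and F \<subseteq> -\<Sigma> that differ from them by null sets. By Tonelli,
   the overlap m(F \<inter> (B + y)) integrates against \<mu> to the integral of 1_B * \<mu> over F,
   which is 0, so the overlap vanishes for \<mu>-a.e. y. By the Steinhaus lemma the set of y
   with positive overlap is open; as every neighbourhood of a support point has positive
   \<mu>-measure, the overlap vanishes at t, and (\<Omega> + t) \<inter> -\<Sigma> is covered by F \<inter> (B + t)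
   and null sets. *)
theory Submission
  imports Defs
begin

lemma mem_translation_iff:
  fixes a x :: "'a::ab_group_add"
  shows "x \<in> (+) a ` S \<longleftrightarrow> x - a \<in> S"
  by (auto simp: image_iff intro: bexI[of _ "x - a"])

lemma locally_finite_measure_imp_sigma_finite:
  fixes \<mu> :: "'a::second_countable_topology measure"
  assumes "sets \<mu> = sets borel" and "locally_finite_measure \<mu>"
  shows "sigma_finite_measure \<mu>"
proof
  obtain U where U: "\<And>x. open (U x)" "\<And>x. x \<in> U x" "\<And>x. emeasure \<mu> (U x) < \<infinity>"
    using assms(2) unfolding locally_finite_measure_def by metis
  obtain \<F> where \<F>: "\<F> \<subseteq> range U" "countable \<F>" "\<Union>\<F> = \<Union>(range U)"
    using Lindelof[of "range U"] U(1) by blast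
  have "space \<mu> = UNIV"
    using sets_eq_imp_space_eq[OF assms(1)] by simp
  moreover have "\<F> \<subseteq> sets \<mu>"
    using \<F>(1) U(1) assms(1) by auto
  moreover have "\<forall>a\<in>\<F>. emeasure \<mu> a \<noteq> \<infinity>"
    using \<F>(1) U(3) by (auto simp: less_top)
  ultimately show "\<exists>A. countable A \<and> A \<subseteq> sets \<mu> \<and> \<Union>A = space \<mu> \<and> (\<forall>a\<in>A. emeasure \<mu> a \<noteq> \<infinity>)"
    using \<F>(2,3) U(2) by (intro exI[of _ \<F>]) auto
qed

lemma frequently_nhds_if_AE_in_measure_support:
  assumes "t \<in> measure_support \<mu>" and "AE y in \<mu>. P y"
  shows "\<exists>\<^sub>F y in nhds t. P y"
proof (rule ccontr)
  assume "\<not> (\<exists>\<^sub>F y in nhds t. P y)"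
  then obtain U where U: "open U" "t \<in> U" "\<And>y. y \<in> U \<Longrightarrow> \<not> P y"
    unfolding frequently_def eventually_nhds by blast
  have pos: "emeasure \<mu> U > 0"
    using assms(1) U unfolding measure_support_def by blast
  then have "U \<in> sets \<mu>"
    using emeasure_notin_sets by fastforce
  from assms(2) obtain N where N: "{y \<in> space \<mu>. \<not> P y} \<subseteq> N" "emeasure \<mu> N = 0" "N \<in> sets \<mu>"
    by (rule AE_E)
  have "U \<subseteq> N"
    using N(1) U(3) sets.sets_into_space[OF \<open>U \<in> sets \<mu>\<close>] by blast
  then have "emeasure \<mu> U \<le> emeasure \<mu> N"
    using N(3) by (rule emeasure_mono)
  with pos N(2) show False by simp
qed

lemma Steinhaus_compact:
  fixes T U :: "'a::euclidean_space set"
  assumes "compact T" and "open U" and "T \<subseteq> U" and "U \<in> lmeasurable"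
    and "measure lebesgue U < 2 * measure lebesgue T"
  obtains d where "d > 0" and "\<And>h. norm h < d \<Longrightarrow> measure lebesgue (T \<inter> (+) h ` T) > 0"
proof -
  obtain d where "d > 0" and d: "\<forall>x\<in>T. \<forall>y\<in>-U. d \<le> dist x y"
    using separate_compact_closed[of T "-U"] assms(1-3) by blast
  have "measure lebesgue (T \<inter> (+) h ` T) > 0" if "norm h < d" for h
  proof -
    have T: "T \<in> lmeasurable" and hT: "(+) h ` T \<in> lmeasurable"
      using lmeasurable_compact[OF assms(1)] measurable_translation by blast+
    have "(+) h ` T \<subseteq> U"
    proof
      fix y assume "y \<in> (+) h ` T"
      then obtain x where x: "x \<in> T" "y = h + x" by blast
      then have "dist x y < d"
        using that by (simp add: dist_norm)
      with d x(1) show "y \<in> U" by force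
    qed
    then have "measure lebesgue (T \<union> (+) h ` T) \<le> measure lebesgue U"
      using assms(3,4) T hT by (intro measure_mono_fmeasurable) (auto simp: fmeasurableD)
    moreover have "measure lebesgue (T \<union> (+) h ` T)
        = 2 * measure lebesgue T - measure lebesgue (T \<inter> (+) h ` T)"
      using measure_Un3[OF T hT] measure_translation[of h T] by simp
    ultimately show ?thesis
      using assms(5) by linarith
  qed
  with \<open>d > 0\<close> that show thesis by blast
qed

lemma lebesgue_inner_compact_pos:
  fixes A :: "'a::euclidean_space set"
  assumes "A \<in> sets lebesgue" and "bounded A" and "emeasure lebesgue A > 0"
  obtains T where "compact T" and "T \<subseteq> A" and "measure lebesgue T > 0"
proof -
  have A: "A \<in> lmeasurable"
    using assms(1,2) by (simp add: bounded_set_imp_lmeasurable)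
  then have mA: "measure lebesgue A > 0"
    using assms(3) by (simp add: emeasure_eq_measure2)
  obtain T where "closed T" "T \<subseteq> A" "A - T \<in> lmeasurable"
    and AT: "emeasure lebesgue (A - T) < ennreal (measure lebesgue A / 2)"
    using sets_lebesgue_inner_closed[OF assms(1), of "measure lebesgue A / 2"] mA by auto
  have "compact T"
    using \<open>closed T\<close> \<open>T \<subseteq> A\<close> assms(2) bounded_subset compact_eq_bounded_closed by blast
  have "measure lebesgue (A - T) < measure lebesgue A / 2"
    using AT \<open>A - T \<in> lmeasurable\<close> mA by (simp add: emeasure_eq_measure2 ennreal_less_iff)
  moreover have "measure lebesgue A - measure lebesgue T \<le> measure lebesgue (A - T)"
    using A lmeasurable_compact[OF \<open>compact T\<close>] by (rule measure_diff_le_measure_setdiff)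
  ultimately have "measure lebesgue T > 0"
    using mA by linarith
  with \<open>compact T\<close> \<open>T \<subseteq> A\<close> that show thesis by blast
qed

lemma lmeasurable_outer_open:
  fixes T :: "'a::euclidean_space set"
  assumes "T \<in> lmeasurable" and "e > 0"
  obtains U where "open U" and "T \<subseteq> U" and "U \<in> lmeasurable"
    and "measure lebesgue U < measure lebesgue T + e"
proof -
  obtain U where "open U" "T \<subseteq> U" and UT: "U - T \<in> lmeasurable"
    "emeasure lebesgue (U - T) < ennreal e"
    using sets_lebesgue_outer_open[of T e] assms by auto
  have U_eq: "U = T \<union> (U - T)"
    using \<open>T \<subseteq> U\<close> by blast
  then have U: "U \<in> lmeasurable"
    using assms(1) UT(1) by (metis fmeasurable.Un)
  have "measure lebesgue U \<le> measure lebesgue T + measure lebesgue (U - T)"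
    using U_eq measure_Un_le[of T lebesgue "U - T"] assms(1) UT(1) by (metis fmeasurableD)
  moreover have "measure lebesgue (U - T) < e"
    using UT assms(2) by (simp add: emeasure_eq_measure2 ennreal_less_iff)
  ultimately have "measure lebesgue U < measure lebesgue T + e"
    by linarith
  with \<open>open U\<close> \<open>T \<subseteq> U\<close> U that show thesis by blast
qed

lemma Steinhaus:
  fixes A :: "'a::euclidean_space set"
  assumes "A \<in> sets lebesgue" and "bounded A" and "emeasure lebesgue A > 0"
  obtains d where "d > 0" and "\<And>h. norm h < d \<Longrightarrow> emeasure lebesgue (A \<inter> (+) h ` A) > 0"
proof -
  obtain T where "compact T" "T \<subseteq> A" "measure lebesgue T > 0"
    using assms by (rule lebesgue_inner_compact_pos)
  then have T: "T \<in> lmeasurable"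
    by (simp add: lmeasurable_compact)
  obtain U where "open U" "T \<subseteq> U" "U \<in> lmeasurable"
    and "measure lebesgue U < measure lebesgue T + measure lebesgue T"
    using T \<open>measure lebesgue T > 0\<close> by (rule lmeasurable_outer_open)
  then obtain d where "d > 0" and d: "\<And>h. norm h < d \<Longrightarrow> measure lebesgue (T \<inter> (+) h ` T) > 0"
    using Steinhaus_compact[OF \<open>compact T\<close>] by (metis mult_2)
  have "emeasure lebesgue (A \<inter> (+) h ` A) > 0" if "norm h < d" for h
  proof -
    have "emeasure lebesgue (T \<inter> (+) h ` T) > 0"
      using d[OF that] T measurable_translation[OF T]
      by (simp add: emeasure_eq_measure2 fmeasurable.Int)
    also have "\<dots> \<le> emeasure lebesgue (A \<inter> (+) h ` A)"
      using \<open>T \<subseteq> A\<close> assms(1) lebesgue_sets_translation[OF assms(1)]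
      by (intro emeasure_mono) auto
    finally show ?thesis .
  qed
  with \<open>d > 0\<close> that show thesis by blast
qed

lemma eventually_nhds_inter_translation_not_null:
  fixes F B :: "'a::euclidean_space set"
  assumes "F \<in> sets lebesgue" and "B \<in> sets lebesgue" and "bounded B"
    and "F \<inter> (+) t ` B \<notin> null_sets lebesgue"
  shows "\<forall>\<^sub>F y in nhds t. F \<inter> (+) y ` B \<notin> null_sets lebesgue"
proof -
  define A where "A = F \<inter> (+) t ` B"
  have A: "A \<in> sets lebesgue"
    unfolding A_def using assms(1) lebesgue_sets_translation[OF assms(2)] by blast
  moreover have "bounded A"
    unfolding A_def using bounded_translation[OF assms(3)] bounded_subset by blast
  moreover have "emeasure lebesgue A > 0"
    using assms(4) A unfolding A_def by (simp add: null_sets_def zero_less_iff_neq_zero)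
  ultimately obtain d where "d > 0" and d: "\<And>h. norm h < d \<Longrightarrow> emeasure lebesgue (A \<inter> (+) h ` A) > 0"
    by (rule Steinhaus) blast
  have "F \<inter> (+) y ` B \<notin> null_sets lebesgue" if "dist y t < d" for y
  proof
    assume "F \<inter> (+) y ` B \<in> null_sets lebesgue"
    moreover have "A \<inter> (+) (y - t) ` A \<subseteq> F \<inter> (+) y ` B"
      unfolding A_def subset_iff Int_iff mem_translation_iff by (simp add: algebra_simps)
    moreover have "A \<inter> (+) (y - t) ` A \<in> sets lebesgue"
      using A lebesgue_sets_translation[OF A] by blast
    ultimately have "A \<inter> (+) (y - t) ` A \<in> null_sets lebesgue"
      by (meson null_sets_subset)
    with d[of "y - t"] that show False
      by (simp add: dist_norm null_sets_def)
  qed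
  with \<open>d > 0\<close> show ?thesis
    unfolding eventually_nhds_metric by blast
qed

lemma conv_indicator_measure_mono:
  assumes "A \<subseteq> B"
  shows "conv_indicator_measure A \<mu> x \<le> conv_indicator_measure B \<mu> x"
  unfolding conv_indicator_measure_def using assms
  by (intro nn_integral_mono) (auto simp: indicator_def)

lemma AE_inter_translation_null_sets:
  fixes F B :: "'a::euclidean_space set" and \<mu> :: "'a measure"
  assumes "sets \<mu> = sets borel" and "sigma_finite_measure \<mu>"
    and [measurable]: "F \<in> sets borel" "B \<in> sets borel"
    and "AE x in lborel. x \<in> F \<longrightarrow> conv_indicator_measure B \<mu> x = 0"
  shows "AE y in \<mu>. F \<inter> (+) y ` B \<in> null_sets lborel"
proof -
  interpret \<mu>: sigma_finite_measure \<mu> by fact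
  interpret pair_sigma_finite lborel \<mu> ..
  have sets_eq: "sets (lborel \<Otimes>\<^sub>M \<mu>) = sets (borel \<Otimes>\<^sub>M borel)"
    using assms(1) by (intro sets_pair_measure_cong) auto
  have "{p \<in> space (lborel \<Otimes>\<^sub>M \<mu>). fst p \<in> F \<longrightarrow> fst p - snd p \<notin> B} \<in> sets (lborel \<Otimes>\<^sub>M \<mu>)"
    unfolding sets_eq sets_eq_imp_space_eq[OF sets_eq] by measurable
  note commute = AE_commute[OF this]
  have "AE x in lborel. AE y in \<mu>. x \<in> F \<longrightarrow> x - y \<notin> B"
    using assms(5)
  proof eventually_elim
    case (elim x)
    have "(\<lambda>y. indicator B (x - y) :: ennreal) \<in> borel_measurable \<mu>"
      unfolding measurable_cong_sets[OF assms(1) refl] by measurable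
    then have "x \<in> F \<Longrightarrow> AE y in \<mu>. indicator B (x - y) = (0 :: ennreal)"
      using elim by (simp add: conv_indicator_measure_def nn_integral_0_iff_AE)
    then show ?case
      by (cases "x \<in> F") (auto elim!: eventually_mono)
  qed
  then have "AE y in \<mu>. AE x in lborel. x \<in> F \<longrightarrow> x - y \<notin> B"
    using commute by simp
  then show ?thesis
  proof eventually_elim
    case (elim y)
    have "F \<inter> (+) y ` B = F \<inter> {x. x - y \<in> B}"
      by (auto simp: mem_translation_iff)
    moreover have "F \<inter> {x. x - y \<in> B} \<in> sets lborel"
      by measurable
    ultimately show ?case
      using elim by (simp add: AE_iff_null_sets)
  qed
qed

lemma null_sets_inter_translation_at_measure_support:
  fixes F B :: "'a::euclidean_space set"
  assumes "F \<in> sets lebesgue" and "B \<in> sets lebesgue" and "bounded B"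
    and "AE y in \<mu>. F \<inter> (+) y ` B \<in> null_sets lebesgue"
    and "t \<in> measure_support \<mu>"
  shows "F \<inter> (+) t ` B \<in> null_sets lebesgue"
proof (rule ccontr)
  assume "F \<inter> (+) t ` B \<notin> null_sets lebesgue"
  with assms(1-3) have "\<forall>\<^sub>F y in nhds t. F \<inter> (+) y ` B \<notin> null_sets lebesgue"
    by (rule eventually_nhds_inter_translation_not_null)
  moreover have "\<exists>\<^sub>F y in nhds t. F \<inter> (+) y ` B \<in> null_sets lebesgue"
    using assms(5,4) by (rule frequently_nhds_if_AE_in_measure_support)
  ultimately show False
    unfolding frequently_def by simp
qed

theorem lemma2p5:
  fixes \<Omega> \<Sigma> :: "'a::euclidean_space set" and \<mu> :: "'a measure"
  assumes "\<Omega> \<in> sets lebesgue" and "bounded \<Omega>"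
    and "sets \<mu> = sets borel" and "locally_finite_measure \<mu>"
    and "\<Sigma> \<in> sets lebesgue"
    and "AE x in lebesgue. x \<in> - \<Sigma> \<longrightarrow> conv_indicator_measure \<Omega> \<mu> x = 0"
    and "t \<in> measure_support \<mu>"
  shows "emeasure lebesgue (((\<lambda>x. x + t) ` \<Omega>) \<inter> - \<Sigma>) = 0"
proof -
  obtain B N N' where \<Omega>: "\<Omega> = B \<union> N" "N \<subseteq> N'" "N' \<in> null_sets lborel" "B \<in> sets borel"
    using sets_completionE[OF assms(1)] by (metis sets_lborel)
  obtain F M M' where \<Sigma>: "- \<Sigma> = F \<union> M" "M \<subseteq> M'" "M' \<in> null_sets lborel" "F \<in> sets borel"
    using sets_completionE[of "- \<Sigma>" lborel] assms(5) by (metis Compl_in_sets_lebesgue sets_lborel)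
  have "AE x in lborel. x \<in> F \<longrightarrow> conv_indicator_measure B \<mu> x = 0"
    using assms(6) conv_indicator_measure_mono[of B \<Omega> \<mu>] \<Omega>(1) \<Sigma>(1)
    by (auto simp: AE_completion_iff elim!: eventually_mono) (metis le_zero_eq)
  then have "AE y in \<mu>. F \<inter> (+) y ` B \<in> null_sets lebesgue"
    using AE_inter_translation_null_sets[OF assms(3) _ \<Sigma>(4) \<Omega>(4)]
      locally_finite_measure_imp_sigma_finite[OF assms(3,4)]
    by (auto elim!: eventually_mono intro: null_sets_completionI)
  then have "F \<inter> (+) t ` B \<in> null_sets lebesgue"
    using null_sets_inter_translation_at_measure_support[OF _ _ _ _ assms(7)] \<Sigma>(4) \<Omega>(4)
      bounded_subset[OF assms(2)] \<Omega>(1) by auto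
  moreover have "{x. x - t \<in> N'} \<in> null_sets lebesgue"
    using null_sets_translation[OF \<Omega>(3)] by (rule null_sets_completionI)
  moreover have "(\<lambda>x. x + t) ` \<Omega> \<inter> - \<Sigma> \<subseteq> (F \<inter> (+) t ` B) \<union> {x. x - t \<in> N'} \<union> M'"
    using \<Omega>(1,2) \<Sigma>(1,2) by (auto simp: mem_translation_iff)
  ultimately show ?thesis
    using \<Sigma>(3) by (meson null_sets.Un null_sets_completionI null_sets_completion_subset null_setsD1)
qed

end
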